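(* Let $f,f'\colon\mathbb F_2^n\to\mathbb F_2$ be two Boolean functions (not necessarily bent). If the translation designs $\operatorname{dev}(D_f)$ and $\operatorname{dev}(D_{f'})$ are isomorphic, then the translation designs $\operatorname{dev}(G_f)$ and $\operatorname{dev}(G_{f'})$ are isomorphic.
   Context: For a subset $A$ of an additive group $G$, the development $\operatorname{dev}(A)$ is the incidence structure whose points are the elements of $G$ and whose blocks are the translates $A+g=\{a+g:a\in A\}$, $g\in G$ (one block per $g$; its incidence matrix has rows indexed by $g$). For $f\colon\mathbb F_2^n\to\mathbb F_2$, $D_f=\{\mathbf x: f(\mathbf x)=1\}\subseteq\mathbb F_2^n$ is its support and $G_f=\{(\mathbf x,f(\mathbf x)):\mathbf x\in\mathbb F_2^n\}\subseteq\mathbb F_2^n\times\mathbb F_2$ its graph. Two incidence structures with incidence matrices $M,M'$ are isomorphic if $M=PM'Q$ for some permutation matrices $P,Q$. *)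

theory Defs
  imports "HOL-Analysis.Analysis" "HOL-Library.Z2"
begin

text \<open>F_2^n is modelled as the type bit ^ 'n (with 'n a finite index type),
  F_2^n x F_2 as (bit ^ 'n) \<times> bit; both are ab_group_add with componentwise addition.\<close>

definition translate :: "'a::ab_group_add set \<Rightarrow> 'a \<Rightarrow> 'a set" where
  "translate A g = (\<lambda>a. a + g) ` A"

text \<open>Incidence matrix of dev(A): rows indexed by g (blocks A+g), columns by points p.\<close>
definition dev_incidence :: "'a::ab_group_add set \<Rightarrow> 'a \<Rightarrow> 'a \<Rightarrow> bool" where
  "dev_incidence A g p \<longleftrightarrow> p \<in> translate A g"

text \<open>M = P M' Q for permutation matrices P, Q: M i j = M' (\<sigma> i) (\<tau> j) for bijections.\<close>
definition incidence_iso :: "('r \<Rightarrow> 'c \<Rightarrow> bool) \<Rightarrow> ('r \<Rightarrow> 'c \<Rightarrow> bool) \<Rightarrow> bool" where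
  "incidence_iso M M' \<longleftrightarrow>
     (\<exists>\<sigma> \<tau>. bij \<sigma> \<and> bij \<tau> \<and> (\<forall>i j. M i j = M' (\<sigma> i) (\<tau> j)))"

definition support :: "('v \<Rightarrow> bit) \<Rightarrow> 'v set" where
  "support f = {x. f x = 1}"

definition graph_set :: "('v \<Rightarrow> bit) \<Rightarrow> ('v \<times> bit) set" where
  "graph_set f = {(x, f x) | x. True}"

end

theory Submission
  imports Defs
begin

text \<open>An isomorphism of dev(D_f) and dev(D_f') is a pair of bijections \<sigma>, \<tau> with
  f(p - g) = f'(\<tau> p - \<sigma> g) for all g, p. Since the point (p, c) lies on the block
  G_f + (g, d) exactly when c - d = f(p - g), the bijections \<sigma> \<times> id and \<tau> \<times> id
  then form an isomorphism of dev(G_f) and dev(G_f').\<close>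

lemma dev_incidence_iff: "dev_incidence A g p \<longleftrightarrow> p - g \<in> A"
  unfolding dev_incidence_def translate_def
  by (auto simp: image_iff) (metis diff_add_cancel)

lemma mem_graph_set_iff [simp]: "(x, y) \<in> graph_set f \<longleftrightarrow> y = f x"
  by (auto simp: graph_set_def)

lemma incidence_iso_dev_support_iff:
  fixes f f' :: "'a::ab_group_add \<Rightarrow> bit"
  shows "incidence_iso (dev_incidence (support f)) (dev_incidence (support f')) \<longleftrightarrow>
    (\<exists>\<sigma> \<tau>. bij \<sigma> \<and> bij \<tau> \<and> (\<forall>g p. f (p - g) = f' (\<tau> p - \<sigma> g)))"
proof -
  have "(f x = 1 \<longleftrightarrow> f' y = 1) \<longleftrightarrow> f x = f' y" for x y
    by (cases "f x"; cases "f' y") auto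
  then show ?thesis
    by (simp add: incidence_iso_def dev_incidence_iff support_def)
qed

lemma bij_map_prod_id:
  assumes "bij \<sigma>"
  shows "bij (map_prod \<sigma> id)"
  using bij_betw_map_prod[OF assms bij_id] by simp

lemma incidence_iso_dev_graph_set:
  fixes f f' :: "'a::ab_group_add \<Rightarrow> bit"
  assumes "bij \<sigma>" and "bij \<tau>" and "\<And>g p. f (p - g) = f' (\<tau> p - \<sigma> g)"
  shows "incidence_iso (dev_incidence (graph_set f)) (dev_incidence (graph_set f'))"
  unfolding incidence_iso_def
proof (intro exI conjI allI)
  show "bij (map_prod \<sigma> id)" and "bij (map_prod \<tau> id)"
    using assms(1,2) by (simp_all add: bij_map_prod_id)
  fix i j :: "'a \<times> bit"
  show "dev_incidence (graph_set f) i j =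
        dev_incidence (graph_set f') (map_prod \<sigma> id i) (map_prod \<tau> id j)"
    by (cases i; cases j) (simp add: dev_incidence_iff assms(3))
qed

theorem proposition1:
  fixes f f' :: "bit ^ 'n \<Rightarrow> bit"
  assumes "incidence_iso (dev_incidence (support f)) (dev_incidence (support f'))"
  shows "incidence_iso (dev_incidence (graph_set f)) (dev_incidence (graph_set f'))"
proof -
  obtain \<sigma> \<tau> where "bij \<sigma>" "bij \<tau>" "\<And>g p. f (p - g) = f' (\<tau> p - \<sigma> g)"
    using assms by (auto simp: incidence_iso_dev_support_iff)
  then show ?thesis
    by (rule incidence_iso_dev_graph_set)
qed

end
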